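(* Let $p(z)=z^n+a_nz^{n-1}+\cdots+a_2z+a_1$ be a complex monic polynomial with $n\geq2$ and $a_1\neq0$, with Frobenius companion matrix $C_p$. Then $$\|C_p^4\|\leq\sqrt{\frac{1}{2}\left(\delta_1+\delta+\sqrt{(\delta_1-\delta)^2+4\delta_2}\right)+1}.$$
   Context: The Frobenius companion matrix of $p$ is the $n\times n$ matrix $C_p$ whose first row is $(-a_n,-a_{n-1},\dots,-a_2,-a_1)$, whose entries $(k+1,k)$ equal $1$ for $k=1,\dots,n-1$, and whose other entries are $0$. Define numbers $b_j,c_j,d_j$ ($j=1,\dots,n$) by: the first row of $C_p^2$ is $(b_n,b_{n-1},\dots,b_1)$, the first row of $C_p^3$ is $(c_n,\dots,c_1)$, the first row of $C_p^4$ is $(d_n,\dots,d_1)$ (so $b_j=a_na_j-a_{j-1}$, $c_j=-a_nb_j+a_{n-1}a_j-a_{j-2}$ with $a_0=a_{-1}=0$). Set $\alpha=\sum_{j=1}^n|a_j|^2$, $\beta=\sum_{j=1}^n|b_j|^2$, $\gamma=-\sum_{j=1}^n b_j\overline{a_j}$, $\delta=\frac{1}{2}\left(\alpha+\beta+\sqrt{(\alpha-\beta)^2+4|\gamma|^2}\right)$; $\alpha_1=\sum_{j=1}^n|d_j|^2$, $\beta_1=\sum_{j=1}^n|c_j|^2$, $\gamma_1=\sum_{j=1}^n d_j\overline{c_j}$, $\delta_1=\frac12\left(\alpha_1+\beta_1+\sqrt{(\alpha_1-\beta_1)^2+4|\gamma_1|^2}\right)$; $\gamma_2=\sum_{j=1}^n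 d_j\overline{b_j}$, $\gamma_3=\sum_{j=1}^n d_j\overline{a_j}$, $\gamma_4=\sum_{j=1}^n c_j\overline{b_j}$, $\gamma_5=\sum_{j=1}^n c_j\overline{a_j}$, and $\delta_2=\frac12\Big(|\gamma_2|^2+|\gamma_3|^2+|\gamma_4|^2+|\gamma_5|^2+\sqrt{\big((|\gamma_2|^2+|\gamma_3|^2)-(|\gamma_4|^2+|\gamma_5|^2)\big)^2+4|\gamma_2\overline{\gamma_4}+\gamma_3\overline{\gamma_5}|^2}\Big)$. $\|\cdot\|$ is the spectral (operator) norm. *)

theory Defs
  imports Complex_Main "Jordan_Normal_Form.Matrix"
begin

text \<open>Frobenius companion matrix of p(z) = z^n + a_n z^(n-1) + ... + a_2 z + a_1
  (0-indexed rows/columns): first row (-a_n, ..., -a_1), ones on the subdiagonal.\<close>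
definition companion :: "nat \<Rightarrow> (nat \<Rightarrow> complex) \<Rightarrow> complex mat" where
  "companion n a = mat n n (\<lambda>(i,j). if i = 0 then - a (n - j)
                                    else if i = j + 1 then 1 else 0)"

definition vec_norm2 :: "complex vec \<Rightarrow> real" where
  "vec_norm2 v = sqrt (\<Sum>i<dim_vec v. (cmod (v $ i))\<^sup>2)"

definition spectral_norm :: "complex mat \<Rightarrow> real" where
  "spectral_norm A = Sup {vec_norm2 (A *\<^sub>v v) | v. v \<in> carrier_vec (dim_col A) \<and> vec_norm2 v \<le> 1}"

text \<open>First-row coefficients: the first row of C_p^k is (x_n, ..., x_1), i.e. x_j is entry (0, n-j).\<close>
definition frow :: "nat \<Rightarrow> (nat \<Rightarrow> complex) \<Rightarrow> nat \<Rightarrow> nat \<Rightarrow> complex" where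
  "frow n a k j = (companion n a ^\<^sub>m k) $$ (0, n - j)"

definition coef_b where "coef_b n a = frow n a 2"
definition coef_c where "coef_c n a = frow n a 3"
definition coef_d where "coef_d n a = frow n a 4"

definition alpha :: "nat \<Rightarrow> (nat \<Rightarrow> complex) \<Rightarrow> real" where
  "alpha n a = (\<Sum>j=1..n. (cmod (a j))\<^sup>2)"
definition beta :: "nat \<Rightarrow> (nat \<Rightarrow> complex) \<Rightarrow> real" where
  "beta n a = (\<Sum>j=1..n. (cmod (coef_b n a j))\<^sup>2)"
definition gamma :: "nat \<Rightarrow> (nat \<Rightarrow> complex) \<Rightarrow> complex" where
  "gamma n a = - (\<Sum>j=1..n. coef_b n a j * cnj (a j))"
definition delta :: "nat \<Rightarrow> (nat \<Rightarrow> complex) \<Rightarrow> real" where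
  "delta n a = (alpha n a + beta n a
      + sqrt ((alpha n a - beta n a)\<^sup>2 + 4 * (cmod (gamma n a))\<^sup>2)) / 2"

definition alpha1 :: "nat \<Rightarrow> (nat \<Rightarrow> complex) \<Rightarrow> real" where
  "alpha1 n a = (\<Sum>j=1..n. (cmod (coef_d n a j))\<^sup>2)"
definition beta1 :: "nat \<Rightarrow> (nat \<Rightarrow> complex) \<Rightarrow> real" where
  "beta1 n a = (\<Sum>j=1..n. (cmod (coef_c n a j))\<^sup>2)"
definition gamma1 :: "nat \<Rightarrow> (nat \<Rightarrow> complex) \<Rightarrow> complex" where
  "gamma1 n a = (\<Sum>j=1..n. coef_d n a j * cnj (coef_c n a j))"
definition delta1 :: "nat \<Rightarrow> (nat \<Rightarrow> complex) \<Rightarrow> real" where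
  "delta1 n a = (alpha1 n a + beta1 n a
      + sqrt ((alpha1 n a - beta1 n a)\<^sup>2 + 4 * (cmod (gamma1 n a))\<^sup>2)) / 2"

definition gamma2 :: "nat \<Rightarrow> (nat \<Rightarrow> complex) \<Rightarrow> complex" where
  "gamma2 n a = (\<Sum>j=1..n. coef_d n a j * cnj (coef_b n a j))"
definition gamma3 :: "nat \<Rightarrow> (nat \<Rightarrow> complex) \<Rightarrow> complex" where
  "gamma3 n a = (\<Sum>j=1..n. coef_d n a j * cnj (a j))"
definition gamma4 :: "nat \<Rightarrow> (nat \<Rightarrow> complex) \<Rightarrow> complex" where
  "gamma4 n a = (\<Sum>j=1..n. coef_c n a j * cnj (coef_b n a j))"
definition gamma5 :: "nat \<Rightarrow> (nat \<Rightarrow> complex) \<Rightarrow> complex" where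
  "gamma5 n a = (\<Sum>j=1..n. coef_c n a j * cnj (a j))"

definition delta2 :: "nat \<Rightarrow> (nat \<Rightarrow> complex) \<Rightarrow> real" where
  "delta2 n a = (let g2 = (cmod (gamma2 n a))\<^sup>2; g3 = (cmod (gamma3 n a))\<^sup>2;
                     g4 = (cmod (gamma4 n a))\<^sup>2; g5 = (cmod (gamma5 n a))\<^sup>2 in
     (g2 + g3 + g4 + g5 + sqrt (((g2 + g3) - (g4 + g5))\<^sup>2
        + 4 * (cmod (gamma2 n a * cnj (gamma4 n a) + gamma3 n a * cnj (gamma5 n a)))\<^sup>2)) / 2)"

end

theory Submission
  imports Defs "HOL-Analysis.L2_Norm"
begin

text \<open>
  Every row of \<open>C\<^sub>p\<close> except the first is a unit vector of the subdiagonal, so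
  \<open>\<parallel>C\<^sub>p v\<parallel>\<^sup>2 \<le> |(C\<^sub>p v)\<^sub>0|\<^sup>2 + \<parallel>v\<parallel>\<^sup>2\<close>, and iterating gives
  \<open>\<parallel>C\<^sub>p\<^sup>4 v\<parallel>\<^sup>2 \<le> \<parallel>R v\<parallel>\<^sup>2 + \<parallel>v\<parallel>\<^sup>2\<close>, where \<open>R\<close> is the \<open>4 \<times> n\<close> matrix of the first rows
  of \<open>C\<^sub>p\<^sup>4, \<dots>, C\<^sub>p\<close>, i.e. of the coefficient vectors \<open>d, c, b, -a\<close> (read backwards).
  The norm of \<open>R\<close> is bounded through the \<open>2 \<times> 2\<close> block decomposition of \<open>R R\<^sup>*\<close>:
  the diagonal blocks are the Gram matrices of \<open>(d, c)\<close> and \<open>(b, a)\<close>, with largest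
  eigenvalues \<open>\<delta>\<^sub>1\<close> and \<open>\<delta>\<close>, and the off-diagonal block \<open>B\<close> satisfies
  \<open>\<parallel>B\<parallel>\<^sup>2 \<le> \<delta>\<^sub>2\<close>, the largest eigenvalue of \<open>B B\<^sup>*\<close>. The largest eigenvalue of the
  \<open>2 \<times> 2\<close> matrix of block norms then bounds \<open>\<parallel>R\<parallel>\<^sup>2\<close>.
\<close>

text \<open>The larger eigenvalue of the Hermitian matrix \<open>[[a, g], [cnj g, b]]\<close> with \<open>c2 = |g|\<^sup>2\<close>;
  \<open>\<delta>\<close>, \<open>\<delta>\<^sub>1\<close> and \<open>\<delta>\<^sub>2\<close> are all of this form.\<close>
definition max_eigenvalue2 :: "real \<Rightarrow> real \<Rightarrow> real \<Rightarrow> real" where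
  "max_eigenvalue2 a b c2 = (a + b + sqrt ((a - b)\<^sup>2 + 4 * c2)) / 2"

definition sqnorm :: "('j \<Rightarrow> complex) \<Rightarrow> 'j set \<Rightarrow> real" where
  "sqnorm r J = (\<Sum>j\<in>J. (cmod (r j))\<^sup>2)"

definition cinner :: "('j \<Rightarrow> complex) \<Rightarrow> ('j \<Rightarrow> complex) \<Rightarrow> 'j set \<Rightarrow> complex" where
  "cinner r s J = (\<Sum>j\<in>J. r j * cnj (s j))"

definition gram_max_eigenvalue :: "('j \<Rightarrow> complex) \<Rightarrow> ('j \<Rightarrow> complex) \<Rightarrow> 'j set \<Rightarrow> real" where
  "gram_max_eigenvalue r s J =
     max_eigenvalue2 (sqnorm r J) (sqnorm s J) ((cmod (cinner r s J))\<^sup>2)"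

text \<open>The largest eigenvalue of \<open>B B\<^sup>*\<close> for the cross block \<open>B = (\<langle>r\<^sub>i, s\<^sub>k\<rangle>)\<^sub>i\<^sub>,\<^sub>k\<close>.\<close>
definition cross_gram_max_eigenvalue ::
    "('j \<Rightarrow> complex) \<Rightarrow> ('j \<Rightarrow> complex) \<Rightarrow> ('j \<Rightarrow> complex) \<Rightarrow> ('j \<Rightarrow> complex) \<Rightarrow> 'j set \<Rightarrow> real" where
  "cross_gram_max_eigenvalue r0 r1 s0 s1 J =
     max_eigenvalue2
       ((cmod (cinner r0 s0 J))\<^sup>2 + (cmod (cinner r0 s1 J))\<^sup>2)
       ((cmod (cinner r1 s0 J))\<^sup>2 + (cmod (cinner r1 s1 J))\<^sup>2)
       ((cmod (cinner r0 s0 J * cnj (cinner r1 s0 J) + cinner r0 s1 J * cnj (cinner r1 s1 J)))\<^sup>2)"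

lemma max_eigenvalue2_nonneg:
  "a \<ge> 0 \<Longrightarrow> b \<ge> 0 \<Longrightarrow> c2 \<ge> 0 \<Longrightarrow> max_eigenvalue2 a b c2 \<ge> 0"
  unfolding max_eigenvalue2_def by simp

lemma max_eigenvalue2_commute: "max_eigenvalue2 a b c2 = max_eigenvalue2 b a c2"
  unfolding max_eigenvalue2_def by (simp add: power2_commute add.commute)

lemma quadratic_form_le_max_eigenvalue2:
  fixes a b c u v :: real
  assumes "c \<ge> 0"
  shows "a * u\<^sup>2 + b * v\<^sup>2 + 2 * c * u * v \<le> max_eigenvalue2 a b (c\<^sup>2) * (u\<^sup>2 + v\<^sup>2)"
proof -
  define R where "R = sqrt ((a - b)\<^sup>2 + 4 * c\<^sup>2)"
  define L where "L = (a + b + R) / 2"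
  have "\<bar>a - b\<bar> \<le> R"
    unfolding R_def by (rule real_le_rsqrt) (simp add: power2_abs)
  then have La: "L - a \<ge> 0" and Lb: "L - b \<ge> 0"
    unfolding L_def by (auto simp: abs_le_iff field_simps)
  have "(L - a) * (L - b) = (R\<^sup>2 - (a - b)\<^sup>2) / 4"
    unfolding L_def by (simp add: field_simps power2_eq_square)
  then have det: "(L - a) * (L - b) = c\<^sup>2"
    unfolding R_def by simp
  have "L * (u\<^sup>2 + v\<^sup>2) - (a * u\<^sup>2 + b * v\<^sup>2 + 2 * c * u * v) \<ge> 0"
  proof (cases "L = a")
    case True
    with det assms have "c = 0" by simp
    with True Lb show ?thesis by (simp add: algebra_simps mult_right_mono)
  next
    case False
    have "(L - a) * (L * (u\<^sup>2 + v\<^sup>2) - (a * u\<^sup>2 + b * v\<^sup>2 + 2 * c * u * v))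
          = ((L - a) * u - c * v)\<^sup>2 + ((L - a) * (L - b) - c\<^sup>2) * v\<^sup>2"
      by (simp add: algebra_simps power2_eq_square)
    with det have "(L - a) * (L * (u\<^sup>2 + v\<^sup>2) - (a * u\<^sup>2 + b * v\<^sup>2 + 2 * c * u * v)) \<ge> 0"
      by simp
    with False La show ?thesis by (simp add: zero_le_mult_iff)
  qed
  then show ?thesis unfolding max_eigenvalue2_def L_def R_def by simp
qed

lemma hermitian_form_le_max_eigenvalue2:
  fixes a b :: real and g z0 z1 :: complex
  shows "a * (cmod z0)\<^sup>2 + b * (cmod z1)\<^sup>2 + 2 * Re (g * z0 * cnj z1)
           \<le> max_eigenvalue2 a b ((cmod g)\<^sup>2) * ((cmod z0)\<^sup>2 + (cmod z1)\<^sup>2)"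
proof -
  have "Re (g * z0 * cnj z1) \<le> cmod g * cmod z0 * cmod z1"
    using complex_Re_le_cmod[of "g * z0 * cnj z1"] by (simp add: norm_mult)
  then have "a * (cmod z0)\<^sup>2 + b * (cmod z1)\<^sup>2 + 2 * Re (g * z0 * cnj z1)
      \<le> a * (cmod z0)\<^sup>2 + b * (cmod z1)\<^sup>2 + 2 * cmod g * cmod z0 * cmod z1"
    by simp
  also have "\<dots> \<le> max_eigenvalue2 a b ((cmod g)\<^sup>2) * ((cmod z0)\<^sup>2 + (cmod z1)\<^sup>2)"
    by (rule quadratic_form_le_max_eigenvalue2) simp
  finally show ?thesis .
qed

lemma sqnorm_nonneg: "sqnorm r J \<ge> 0"
  unfolding sqnorm_def by (simp add: sum_nonneg)

lemma cmod_lincomb2_sq: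
  fixes y0 y1 r0 r1 :: complex
  shows "(cmod (y0 * r0 + y1 * r1))\<^sup>2 = (cmod y0)\<^sup>2 * (cmod r0)\<^sup>2 + (cmod y1)\<^sup>2 * (cmod r1)\<^sup>2
           + 2 * Re (y0 * cnj y1 * (r0 * cnj r1))"
  unfolding cmod_power2 by (simp add: power2_eq_square algebra_simps)

lemma sqnorm_lincomb2:
  "sqnorm (\<lambda>j. y0 * r0 j + y1 * r1 j) J
     = (cmod y0)\<^sup>2 * sqnorm r0 J + (cmod y1)\<^sup>2 * sqnorm r1 J + 2 * Re (y0 * cnj y1 * cinner r0 r1 J)"
  unfolding sqnorm_def cinner_def
  by (simp add: cmod_lincomb2_sq sum.distrib sum_distrib_left Re_sum)

lemma sqnorm_add:
  "sqnorm (\<lambda>j. u j + v j) J = sqnorm u J + sqnorm v J + 2 * Re (cinner u v J)"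
  using sqnorm_lincomb2[of 1 u 1 v J] by simp

lemma cmod_sum_mult_le:
  "cmod (\<Sum>j\<in>J. x j * w j) \<le> sqrt (sqnorm x J) * sqrt (sqnorm w J)"
proof -
  have "cmod (\<Sum>j\<in>J. x j * w j) \<le> (\<Sum>j\<in>J. \<bar>cmod (x j)\<bar> * \<bar>cmod (w j)\<bar>)"
    using norm_sum[of "\<lambda>j. x j * w j" J] by (simp add: norm_mult)
  also have "\<dots> \<le> L2_set (\<lambda>j. cmod (x j)) J * L2_set (\<lambda>j. cmod (w j)) J"
    by (rule L2_set_mult_ineq)
  finally show ?thesis unfolding L2_set_def sqnorm_def .
qed

lemma cmod_lincomb2_le:
  fixes a b c d :: complex
  shows "cmod (a * b + c * d) \<le> sqrt ((cmod a)\<^sup>2 + (cmod c)\<^sup>2) * sqrt ((cmod b)\<^sup>2 + (cmod d)\<^sup>2)"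
  using cmod_sum_mult_le[of "\<lambda>i. if i then a else c" "\<lambda>i. if i then b else d" UNIV]
  by (simp add: sqnorm_def UNIV_bool add.commute)

lemma sqnorm_lincomb2_le:
  "sqnorm (\<lambda>j. y0 * r0 j + y1 * r1 j) J
     \<le> gram_max_eigenvalue r0 r1 J * ((cmod y0)\<^sup>2 + (cmod y1)\<^sup>2)"
  using hermitian_form_le_max_eigenvalue2[of "sqnorm r0 J" y0 "sqnorm r1 J" y1 "cinner r0 r1 J"]
  unfolding sqnorm_lincomb2 gram_max_eigenvalue_def by (simp add: algebra_simps)

lemma gram_max_eigenvalue_nonneg: "gram_max_eigenvalue r s J \<ge> 0"
  unfolding gram_max_eigenvalue_def by (intro max_eigenvalue2_nonneg sqnorm_nonneg) simp

lemma cross_gram_max_eigenvalue_nonneg: "cross_gram_max_eigenvalue r0 r1 s0 s1 J \<ge> 0"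
  unfolding cross_gram_max_eigenvalue_def by (rule max_eigenvalue2_nonneg) simp_all

lemma Re_cinner_lincomb2_le:
  "Re (cinner (\<lambda>j. y0 * r0 j + y1 * r1 j) (\<lambda>j. y2 * s0 j + y3 * s1 j) J)
     \<le> sqrt (cross_gram_max_eigenvalue r0 r1 s0 s1 J)
        * sqrt ((cmod y0)\<^sup>2 + (cmod y1)\<^sup>2) * sqrt ((cmod y2)\<^sup>2 + (cmod y3)\<^sup>2)"
proof -
  define g00 g01 g10 g11 where "g00 = cinner r0 s0 J" and "g01 = cinner r0 s1 J"
    and "g10 = cinner r1 s0 J" and "g11 = cinner r1 s1 J"
  define z0 z1 where "z0 = y0 * g00 + y1 * g10" and "z1 = y0 * g01 + y1 * g11"
  have "cinner (\<lambda>j. y0 * r0 j + y1 * r1 j) (\<lambda>j. y2 * s0 j + y3 * s1 j) J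
        = cnj y2 * z0 + cnj y3 * z1" (is "?inner = _")
    unfolding cinner_def z0_def z1_def g00_def g01_def g10_def g11_def
    by (simp add: algebra_simps sum.distrib sum_distrib_left)
  then have cinner_eq: "Re ?inner = Re (cnj y2 * z0 + cnj y3 * z1)" by simp
  have "(cmod z0)\<^sup>2 + (cmod z1)\<^sup>2
      = ((cmod g00)\<^sup>2 + (cmod g01)\<^sup>2) * (cmod y0)\<^sup>2 + ((cmod g10)\<^sup>2 + (cmod g11)\<^sup>2) * (cmod y1)\<^sup>2
        + 2 * Re ((g00 * cnj g10 + g01 * cnj g11) * y0 * cnj y1)"
    unfolding z0_def z1_def cmod_lincomb2_sq by (simp add: algebra_simps)
  also have "\<dots> \<le> cross_gram_max_eigenvalue r0 r1 s0 s1 J * ((cmod y0)\<^sup>2 + (cmod y1)\<^sup>2)"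
    unfolding cross_gram_max_eigenvalue_def g00_def g01_def g10_def g11_def
    by (rule hermitian_form_le_max_eigenvalue2)
  finally have z_bound: "(cmod z0)\<^sup>2 + (cmod z1)\<^sup>2
      \<le> cross_gram_max_eigenvalue r0 r1 s0 s1 J * ((cmod y0)\<^sup>2 + (cmod y1)\<^sup>2)" .
  have "Re (cnj y2 * z0 + cnj y3 * z1) \<le> cmod (cnj y2 * z0 + cnj y3 * z1)"
    by (rule complex_Re_le_cmod)
  also have "\<dots> \<le> sqrt ((cmod y2)\<^sup>2 + (cmod y3)\<^sup>2) * sqrt ((cmod z0)\<^sup>2 + (cmod z1)\<^sup>2)"
    using cmod_lincomb2_le[of "cnj y2" z0 "cnj y3" z1] by simp
  also have "\<dots> \<le> sqrt ((cmod y2)\<^sup>2 + (cmod y3)\<^sup>2)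
      * sqrt (cross_gram_max_eigenvalue r0 r1 s0 s1 J * ((cmod y0)\<^sup>2 + (cmod y1)\<^sup>2))"
    using z_bound by (intro mult_left_mono) simp_all
  finally show ?thesis
    unfolding cinner_eq real_sqrt_mult by (simp only: ac_simps)
qed

lemma sqnorm_lincomb4_le:
  "sqnorm (\<lambda>j. y0 * r0 j + y1 * r1 j + (y2 * s0 j + y3 * s1 j)) J
     \<le> max_eigenvalue2 (gram_max_eigenvalue r0 r1 J) (gram_max_eigenvalue s0 s1 J)
          (cross_gram_max_eigenvalue r0 r1 s0 s1 J)
        * ((cmod y0)\<^sup>2 + (cmod y1)\<^sup>2 + (cmod y2)\<^sup>2 + (cmod y3)\<^sup>2)"
proof -
  define t0 where "t0 = sqrt ((cmod y0)\<^sup>2 + (cmod y1)\<^sup>2)"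
  define t1 where "t1 = sqrt ((cmod y2)\<^sup>2 + (cmod y3)\<^sup>2)"
  define c where "c = sqrt (cross_gram_max_eigenvalue r0 r1 s0 s1 J)"
  have c2: "c\<^sup>2 = cross_gram_max_eigenvalue r0 r1 s0 s1 J"
    unfolding c_def using cross_gram_max_eigenvalue_nonneg by simp
  have "sqnorm (\<lambda>j. y0 * r0 j + y1 * r1 j + (y2 * s0 j + y3 * s1 j)) J
      \<le> gram_max_eigenvalue r0 r1 J * t0\<^sup>2 + gram_max_eigenvalue s0 s1 J * t1\<^sup>2 + 2 * c * t0 * t1"
    using sqnorm_add[of "\<lambda>j. y0 * r0 j + y1 * r1 j" "\<lambda>j. y2 * s0 j + y3 * s1 j" J]
      sqnorm_lincomb2_le[of y0 r0 y1 r1 J] sqnorm_lincomb2_le[of y2 s0 y3 s1 J]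
      Re_cinner_lincomb2_le[of y0 r0 y1 r1 y2 s0 y3 s1 J]
    unfolding t0_def t1_def c_def by simp
  also have "\<dots> \<le> max_eigenvalue2 (gram_max_eigenvalue r0 r1 J) (gram_max_eigenvalue s0 s1 J) (c\<^sup>2)
        * (t0\<^sup>2 + t1\<^sup>2)"
    by (rule quadratic_form_le_max_eigenvalue2) (simp add: c_def cross_gram_max_eigenvalue_nonneg)
  finally show ?thesis
    unfolding c2 t0_def t1_def by (simp add: add.assoc)
qed

text \<open>Testing the transposed bound against \<open>y = cnj p\<close>, where \<open>p\<close> is the image of \<open>x\<close>, gives \<open>\<parallel>p\<parallel>\<^sup>2 \<le> \<parallel>x\<parallel> sqrt (L \<parallel>p\<parallel>\<^sup>2)\<close>.\<close>
lemma sqnorm_apply_le_of_transpose_bound: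
  fixes r :: "'k \<Rightarrow> 'j \<Rightarrow> complex"
  assumes transpose_bound: "\<And>y. sqnorm (\<lambda>j. \<Sum>k\<in>K. y k * r k j) J \<le> L * sqnorm y K"
    and "L \<ge> 0"
  shows "sqnorm (\<lambda>k. \<Sum>j\<in>J. r k j * x j) K \<le> L * sqnorm x J"
proof -
  define p where "p k = (\<Sum>j\<in>J. r k j * x j)" for k
  define w where "w j = (\<Sum>k\<in>K. cnj (p k) * r k j)" for j
  define S where "S = sqnorm p K"
  have S0: "S \<ge> 0" and X0: "sqnorm x J \<ge> 0" and W0: "sqnorm w J \<ge> 0"
    unfolding S_def by (simp_all add: sqnorm_nonneg)
  have "(\<Sum>j\<in>J. x j * w j) = (\<Sum>k\<in>K. cnj (p k) * (\<Sum>j\<in>J. r k j * x j))"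
    unfolding w_def sum_distrib_left by (subst sum.swap) (simp add: ac_simps)
  also have "\<dots> = (\<Sum>k\<in>K. cnj (p k) * p k)"
    unfolding p_def ..
  also have "\<dots> = of_real S"
    unfolding S_def sqnorm_def of_real_sum complex_norm_square by (simp add: mult.commute)
  finally have "S \<le> sqrt (sqnorm x J) * sqrt (sqnorm w J)"
    using cmod_sum_mult_le[of x w J] S0 by simp
  then have "S\<^sup>2 \<le> sqnorm x J * sqnorm w J"
    using S0 X0 W0 by (metis power_mono real_sqrt_mult real_sqrt_pow2 mult_nonneg_nonneg)
  also have "\<dots> \<le> sqnorm x J * (L * S)"
    using transpose_bound[of "\<lambda>k. cnj (p k)"] X0 unfolding w_def S_def sqnorm_def
    by (intro mult_left_mono) simp_all
  finally have "S * S \<le> (L * sqnorm x J) * S"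
    by (simp add: power2_eq_square algebra_simps)
  then have "S \<le> L * sqnorm x J"
    using S0 X0 \<open>L \<ge> 0\<close> by (cases "S = 0") simp_all
  then show ?thesis unfolding S_def p_def .
qed

lemma sqnorm_four_rows_apply_le:
  fixes R :: "nat \<Rightarrow> 'j \<Rightarrow> complex"
  shows "sqnorm (\<lambda>k. \<Sum>j\<in>J. R k j * x j) {..<4}
     \<le> max_eigenvalue2 (gram_max_eigenvalue (R 3) (R 2) J) (gram_max_eigenvalue (R 1) (R 0) J)
          (cross_gram_max_eigenvalue (R 3) (R 2) (R 1) (R 0) J) * sqnorm x J"
proof (rule sqnorm_apply_le_of_transpose_bound)
  fix y :: "nat \<Rightarrow> complex"
  show "sqnorm (\<lambda>j. \<Sum>k<4. y k * R k j) J
     \<le> max_eigenvalue2 (gram_max_eigenvalue (R 3) (R 2) J) (gram_max_eigenvalue (R 1) (R 0) J)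
          (cross_gram_max_eigenvalue (R 3) (R 2) (R 1) (R 0) J) * sqnorm y {..<4}"
    using sqnorm_lincomb4_le[of "y 3" "R 3" "y 2" "R 2" "y 1" "R 1" "y 0" "R 0" J]
    by (simp add: eval_nat_numeral sqnorm_def ac_simps)
qed (intro max_eigenvalue2_nonneg gram_max_eigenvalue_nonneg cross_gram_max_eigenvalue_nonneg)

definition row0 :: "complex mat \<Rightarrow> nat \<Rightarrow> complex" where
  "row0 A j = A $$ (0, j)"

lemma vec_norm2_eq_sqnorm: "vec_norm2 v = sqrt (sqnorm (($) v) {..<dim_vec v})"
  unfolding vec_norm2_def sqnorm_def ..

lemma mult_mat_vec_nth0:
  assumes "A \<in> carrier_mat m n" "v \<in> carrier_vec n" "0 < m"
  shows "(A *\<^sub>v v) $ 0 = (\<Sum>j<n. row0 A j * v $ j)"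
  using assms by (simp add: row0_def scalar_prod_def atLeast0LessThan)

lemma spectral_norm_le_sqrt:
  assumes A: "A \<in> carrier_mat m n" and "K \<ge> 0"
    and bound: "\<And>v. v \<in> carrier_vec n \<Longrightarrow> sqnorm (($) (A *\<^sub>v v)) {..<m} \<le> K * sqnorm (($) v) {..<n}"
  shows "spectral_norm A \<le> sqrt K"
  unfolding spectral_norm_def
proof (rule cSup_least)
  have "vec_norm2 (0\<^sub>v (dim_col A)) \<le> 1"
    by (simp add: vec_norm2_def)
  then show "{vec_norm2 (A *\<^sub>v v) |v. v \<in> carrier_vec (dim_col A) \<and> vec_norm2 v \<le> 1} \<noteq> {}"
    using zero_carrier_vec by blast
next
  fix x assume "x \<in> {vec_norm2 (A *\<^sub>v v) |v. v \<in> carrier_vec (dim_col A) \<and> vec_norm2 v \<le> 1}"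
  then obtain v where x: "x = vec_norm2 (A *\<^sub>v v)" and v: "v \<in> carrier_vec n" and "vec_norm2 v \<le> 1"
    using A by auto
  then have "sqnorm (($) v) {..<n} \<le> 1"
    by (simp add: vec_norm2_eq_sqnorm)
  with bound[OF v] \<open>K \<ge> 0\<close> have "sqnorm (($) (A *\<^sub>v v)) {..<m} \<le> K"
    by (meson mult_left_le order_trans sqnorm_nonneg)
  then show "x \<le> sqrt K"
    using A by (simp add: x vec_norm2_eq_sqnorm)
qed

lemma dim_companion [simp]: "dim_row (companion n a) = n" "dim_col (companion n a) = n"
  unfolding companion_def by simp_all

lemma companion_carrier [simp]: "companion n a \<in> carrier_mat n n"
  unfolding companion_def by simp

lemma companion_nth:
  "i < n \<Longrightarrow> j < n \<Longrightarrow>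
     companion n a $$ (i, j) = (if i = 0 then - a (n - j) else if i = j + 1 then 1 else 0)"
  unfolding companion_def by simp

lemma companion_mult_vec_nth_Suc:
  assumes w: "w \<in> carrier_vec n" and i: "Suc i < n"
  shows "(companion n a *\<^sub>v w) $ Suc i = w $ i"
proof -
  have "(companion n a *\<^sub>v w) $ Suc i = (\<Sum>j<n. companion n a $$ (Suc i, j) * w $ j)"
    using w i by (simp add: scalar_prod_def atLeast0LessThan)
  also have "\<dots> = (\<Sum>j<n. if j = i then w $ j else 0)"
    using i by (intro sum.cong) (auto simp: companion_nth)
  finally show ?thesis using i by simp
qed

lemma sqnorm_companion_mult_vec_le:
  assumes w: "w \<in> carrier_vec n" and "0 < n"
  shows "sqnorm (($) (companion n a *\<^sub>v w)) {..<n}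
     \<le> (cmod ((companion n a *\<^sub>v w) $ 0))\<^sup>2 + sqnorm (($) w) {..<n}"
proof -
  obtain m where m: "n = Suc m" using \<open>0 < n\<close> by (cases n) auto
  have "sqnorm (($) (companion n a *\<^sub>v w)) {..<n}
     = (cmod ((companion n a *\<^sub>v w) $ 0))\<^sup>2 + (\<Sum>i<m. (cmod (w $ i))\<^sup>2)"
    unfolding sqnorm_def m sum.lessThan_Suc_shift
    using w m by (intro arg_cong2[where f = "(+)"] sum.cong refl, subst companion_mult_vec_nth_Suc) auto
  also have "\<dots> \<le> (cmod ((companion n a *\<^sub>v w) $ 0))\<^sup>2 + sqnorm (($) w) {..<n}"
    unfolding sqnorm_def m by simp
  finally show ?thesis .
qed

lemma sqnorm_companion_pow_mult_vec_le:
  assumes "v \<in> carrier_vec n" and "0 < n"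
  shows "sqnorm (($) (companion n a ^\<^sub>m m *\<^sub>v v)) {..<n}
     \<le> (\<Sum>k<m. (cmod ((companion n a ^\<^sub>m Suc k *\<^sub>v v) $ 0))\<^sup>2) + sqnorm (($) v) {..<n}"
  using assms(1)
proof (induction m arbitrary: v)
  case 0
  then show ?case by simp
next
  case (Suc m)
  let ?C = "companion n a"
  have Cv: "?C *\<^sub>v v \<in> carrier_vec n"
    by (rule mult_mat_vec_carrier[OF companion_carrier Suc.prems])
  have shift: "?C ^\<^sub>m k *\<^sub>v (?C *\<^sub>v v) = ?C ^\<^sub>m Suc k *\<^sub>v v" for k
    using Suc.prems by (simp add: assoc_mult_mat_vec[of _ n n _ n])
  have "sqnorm (($) (?C ^\<^sub>m Suc m *\<^sub>v v)) {..<n}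
     \<le> (\<Sum>k<m. (cmod ((?C ^\<^sub>m Suc (Suc k) *\<^sub>v v) $ 0))\<^sup>2) + sqnorm (($) (?C *\<^sub>v v)) {..<n}"
    using Suc.IH[OF Cv] by (simp only: shift)
  also have "\<dots> \<le> (\<Sum>k<m. (cmod ((?C ^\<^sub>m Suc (Suc k) *\<^sub>v v) $ 0))\<^sup>2)
      + (cmod ((?C ^\<^sub>m Suc 0 *\<^sub>v v) $ 0))\<^sup>2 + sqnorm (($) v) {..<n}"
    using sqnorm_companion_mult_vec_le[OF Suc.prems \<open>0 < n\<close>] Suc.prems by simp
  finally show ?case by (simp only: sum.lessThan_Suc_shift add_ac)
qed

lemma sum_atLeast1_atMost_reflect: "(\<Sum>j=1..n. f (n - j)) = (\<Sum>j<n. f j)" for n :: nat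
  by (rule sum.reindex_bij_witness[of _ "\<lambda>j. n - j" "\<lambda>j. n - j"]) auto

lemma sum_frow_reflect:
  "(\<Sum>j=1..n. f (frow n a k j) (frow n a l j))
     = (\<Sum>j<n. f (row0 (companion n a ^\<^sub>m k) j) (row0 (companion n a ^\<^sub>m l) j))"
  unfolding frow_def row0_def by (rule sum_atLeast1_atMost_reflect)

lemma frow_one: "1 \<le> j \<Longrightarrow> j \<le> n \<Longrightarrow> frow n a 1 j = - a j"
  by (auto simp: frow_def companion_nth)

lemma delta_eq_gram_max_eigenvalue:
  "delta n a = gram_max_eigenvalue (row0 (companion n a ^\<^sub>m 2)) (row0 (companion n a ^\<^sub>m 1)) {..<n}"
proof -
  have "alpha n a = (\<Sum>j=1..n. (cmod (frow n a 1 j))\<^sup>2)"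
    unfolding alpha_def by (intro sum.cong refl) (auto simp: frow_one[simplified])
  also have "\<dots> = sqnorm (row0 (companion n a ^\<^sub>m 1)) {..<n}"
    unfolding sqnorm_def by (rule sum_frow_reflect)
  finally have alpha: "alpha n a = sqnorm (row0 (companion n a ^\<^sub>m 1)) {..<n}" .
  have beta: "beta n a = sqnorm (row0 (companion n a ^\<^sub>m 2)) {..<n}"
    unfolding beta_def coef_b_def sqnorm_def by (rule sum_frow_reflect)
  have "gamma n a = (\<Sum>j=1..n. frow n a 2 j * cnj (frow n a 1 j))"
    unfolding gamma_def coef_b_def sum_negf[symmetric] by (intro sum.cong refl) (auto simp: frow_one[simplified])
  also have "\<dots> = cinner (row0 (companion n a ^\<^sub>m 2)) (row0 (companion n a ^\<^sub>m 1)) {..<n}"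
    unfolding cinner_def by (rule sum_frow_reflect)
  finally have gamma: "gamma n a = \<dots>" .
  show ?thesis
    unfolding delta_def gram_max_eigenvalue_def alpha beta gamma
    by (subst max_eigenvalue2_commute) (simp add: max_eigenvalue2_def)
qed

lemma delta1_eq_gram_max_eigenvalue:
  "delta1 n a = gram_max_eigenvalue (row0 (companion n a ^\<^sub>m 4)) (row0 (companion n a ^\<^sub>m 3)) {..<n}"
proof -
  have "alpha1 n a = sqnorm (row0 (companion n a ^\<^sub>m 4)) {..<n}"
    unfolding alpha1_def coef_d_def sqnorm_def by (rule sum_frow_reflect)
  moreover have "beta1 n a = sqnorm (row0 (companion n a ^\<^sub>m 3)) {..<n}"
    unfolding beta1_def coef_c_def sqnorm_def by (rule sum_frow_reflect)
  moreover have "gamma1 n a = cinner (row0 (companion n a ^\<^sub>m 4)) (row0 (companion n a ^\<^sub>m 3)) {..<n}"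
    unfolding gamma1_def coef_c_def coef_d_def cinner_def by (rule sum_frow_reflect)
  ultimately show ?thesis
    unfolding delta1_def gram_max_eigenvalue_def max_eigenvalue2_def by simp
qed

lemma delta2_eq_cross_gram_max_eigenvalue:
  "delta2 n a = cross_gram_max_eigenvalue (row0 (companion n a ^\<^sub>m 4)) (row0 (companion n a ^\<^sub>m 3))
                  (row0 (companion n a ^\<^sub>m 2)) (row0 (companion n a ^\<^sub>m 1)) {..<n}"
proof -
  have "gamma2 n a = cinner (row0 (companion n a ^\<^sub>m 4)) (row0 (companion n a ^\<^sub>m 2)) {..<n}"
    unfolding gamma2_def coef_b_def coef_d_def cinner_def by (rule sum_frow_reflect)
  moreover have "gamma4 n a = cinner (row0 (companion n a ^\<^sub>m 3)) (row0 (companion n a ^\<^sub>m 2)) {..<n}"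
    unfolding gamma4_def coef_b_def coef_c_def cinner_def by (rule sum_frow_reflect)
  moreover have "gamma3 n a = - cinner (row0 (companion n a ^\<^sub>m 4)) (row0 (companion n a ^\<^sub>m 1)) {..<n}"
  proof -
    have "gamma3 n a = (\<Sum>j=1..n. - (frow n a 4 j * cnj (frow n a 1 j)))"
      unfolding gamma3_def coef_d_def by (intro sum.cong refl) (auto simp: frow_one[simplified])
    also have "\<dots> = - cinner (row0 (companion n a ^\<^sub>m 4)) (row0 (companion n a ^\<^sub>m 1)) {..<n}"
      unfolding cinner_def sum_negf[symmetric] by (rule sum_frow_reflect)
    finally show ?thesis .
  qed
  moreover have "gamma5 n a = - cinner (row0 (companion n a ^\<^sub>m 3)) (row0 (companion n a ^\<^sub>m 1)) {..<n}"
  proof -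
    have "gamma5 n a = (\<Sum>j=1..n. - (frow n a 3 j * cnj (frow n a 1 j)))"
      unfolding gamma5_def coef_c_def by (intro sum.cong refl) (auto simp: frow_one[simplified])
    also have "\<dots> = - cinner (row0 (companion n a ^\<^sub>m 3)) (row0 (companion n a ^\<^sub>m 1)) {..<n}"
      unfolding cinner_def sum_negf[symmetric] by (rule sum_frow_reflect)
    finally show ?thesis .
  qed
  ultimately show ?thesis
    unfolding delta2_def cross_gram_max_eigenvalue_def max_eigenvalue2_def Let_def
    by (simp add: add.assoc)
qed

theorem mainTheorem11:
  fixes n :: nat and a :: "nat \<Rightarrow> complex"
  assumes "n \<ge> 2" and "a 1 \<noteq> 0"
  shows "spectral_norm (companion n a ^\<^sub>m 4)
           \<le> sqrt ((delta1 n a + delta n a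
                     + sqrt ((delta1 n a - delta n a)\<^sup>2 + 4 * delta2 n a)) / 2 + 1)"
proof -
  let ?C = "companion n a"
  let ?L = "max_eigenvalue2 (delta1 n a) (delta n a) (delta2 n a)"
  have n: "0 < n" using assms(1) by simp
  have L: "?L = max_eigenvalue2
      (gram_max_eigenvalue (row0 (?C ^\<^sub>m Suc 3)) (row0 (?C ^\<^sub>m Suc 2)) {..<n})
      (gram_max_eigenvalue (row0 (?C ^\<^sub>m Suc 1)) (row0 (?C ^\<^sub>m Suc 0)) {..<n})
      (cross_gram_max_eigenvalue (row0 (?C ^\<^sub>m Suc 3)) (row0 (?C ^\<^sub>m Suc 2))
         (row0 (?C ^\<^sub>m Suc 1)) (row0 (?C ^\<^sub>m Suc 0)) {..<n})"
    unfolding delta1_eq_gram_max_eigenvalue delta_eq_gram_max_eigenvalue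
      delta2_eq_cross_gram_max_eigenvalue by (simp add: eval_nat_numeral)
  have "sqnorm (($) (?C ^\<^sub>m 4 *\<^sub>v v)) {..<n} \<le> (?L + 1) * sqnorm (($) v) {..<n}"
    if v: "v \<in> carrier_vec n" for v
  proof -
    have "(\<Sum>k<4. (cmod ((?C ^\<^sub>m Suc k *\<^sub>v v) $ 0))\<^sup>2)
        = sqnorm (\<lambda>k. \<Sum>j<n. row0 (?C ^\<^sub>m Suc k) j * v $ j) {..<4}"
      unfolding sqnorm_def using v n
      by (intro sum.cong refl arg_cong[where f = "\<lambda>z. (cmod z)\<^sup>2"] mult_mat_vec_nth0) (simp_all del: pow_mat.simps)
    also have "\<dots> \<le> ?L * sqnorm (($) v) {..<n}"
      unfolding L by (rule sqnorm_four_rows_apply_le)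
    finally show ?thesis
      using sqnorm_companion_pow_mult_vec_le[OF v n, of a 4] by (simp add: algebra_simps)
  qed
  moreover have "?L \<ge> 0"
    unfolding L by (intro max_eigenvalue2_nonneg gram_max_eigenvalue_nonneg cross_gram_max_eigenvalue_nonneg)
  ultimately have "spectral_norm (?C ^\<^sub>m 4) \<le> sqrt (?L + 1)"
    by (intro spectral_norm_le_sqrt[of _ n n]) simp_all
  then show ?thesis unfolding max_eigenvalue2_def .
qed

end
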